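(* Let $K\ge 2$, $T\ge1$, and let $\mathbf{x}(t)\in[0,1]^K$, $t=1,\dots,T$, be any fixed sequence of reward vectors. Let $\tau=e\,\mathbb{G}_{max}-(4-e)\,\mathbb{G}_{min}$ and run the algorithm REX3 described in the context with transfer function $\psi$ equal to the identity and parameter $\gamma=\min\left\{\tfrac12,\sqrt{\frac{K\ln(K)}{\tau}}\right\}$ (with $\gamma=\tfrac12$ if $\tau=0$). Then the expected regret $\mathbb{G}_{max}-\mathbb{E}\mathbb{G}_{alg}$ is $\mathcal{O}\big(\sqrt{K\ln(K)\,T}\big)$.
   Context: Adversarial utility-based dueling bandit setting: there are $K$ arms; before play, an (oblivious) environment fixes a horizon $T$ and reward vectors $\mathbf{x}(t)=(x_1(t),\dots,x_K(t))\in[0,1]^K$ for $t=1,\dots,T$. At each round the learner selects a pair of arms $(a_t,b_t)$ and observes only the relative feedback $\psi(x_{a_t}(t)-x_{b_t}(t))$, here with $\psi(z)=z$. Algorithm REX3 with parameter $\gamma$: initialize $w_i(1)=1$ for all $i$. At each round $t$: set $p_i(t)=(1-\gamma)\frac{w_i(t)}{\sum_{j=1}^K w_j(t)}+\frac{\gamma}{K}$; draw two arms $a_t,b_t$ independently according to $\mathbf{p}(t)=(p_1(t),\dots,p_K(t))$; receive $\psi(x_{a_t}(t)-x_{b_t}(t))$; if $a_t\neq b_t$, set $w_{a_t}(t+1)=w_{a_t}(t)\exp\!\big(\frac{\gamma}{K}\frac{\psi(x_{a_t}-x_{b_t})}{2p_{a_t}(t)}\big)$ and $w_{b_t}(t+1)=w_{b_t}(t)\exp\!\big(-\frac{\gamma}{K}\frac{\psi(x_{a_t}-x_{b_t})}{2p_{b_t}(t)}\big)$;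 other weights unchanged. Notation: $\mathbb{G}_{max}=\max_i\sum_{t=1}^T x_i(t)$; $\mathbb{G}_{min}=\min_i\sum_{t=1}^T x_i(t)$; $\mathbb{G}_{alg}=\frac12\sum_{t=1}^T\big(x_{a_t}(t)+x_{b_t}(t)\big)$. Expectations are over the algorithm's internal randomization. The $\mathcal{O}$ hides an absolute constant independent of $K$, $T$ and the rewards (for $T$ large enough relative to $K\ln K$). *)

theory Defs
  imports Complex_Main
begin

text \<open>Arms are 0..K-1, rounds are 1..T; a reward sequence is x :: nat => nat => real,
  x t i = reward of arm i at round t. Weights are w :: nat => real.\<close>

definition rex3_prob :: "nat \<Rightarrow> real \<Rightarrow> (nat \<Rightarrow> real) \<Rightarrow> nat \<Rightarrow> real" where
  "rex3_prob K \<gamma> w i = (1 - \<gamma>) * w i / (\<Sum>j<K. w j) + \<gamma> / real K"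

text \<open>Weight update after playing (a,b) and observing z = psi(x_a - x_b) (psi = identity).\<close>
definition rex3_update :: "nat \<Rightarrow> real \<Rightarrow> (nat \<Rightarrow> real) \<Rightarrow> nat \<Rightarrow> nat \<Rightarrow> real \<Rightarrow> (nat \<Rightarrow> real)" where
  "rex3_update K \<gamma> w a b z =
     (if a = b then w
      else w(a := w a * exp ((\<gamma> / real K) * (z / (2 * rex3_prob K \<gamma> w a))),
             b := w b * exp (- (\<gamma> / real K) * (z / (2 * rex3_prob K \<gamma> w b)))))"

text \<open>Expected cumulative gain (x_a + x_b)/2 of REX3 over the n rounds t, t+1, ..., t+n-1,
  starting from weights w; the two arms are drawn independently from p(t).\<close>
fun rex3_exp_gain :: "nat \<Rightarrow> real \<Rightarrow> (nat \<Rightarrow> nat \<Rightarrow> real) \<Rightarrow> nat \<Rightarrow> nat \<Rightarrow> (nat \<Rightarrow> real) \<Rightarrow> real" where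
  "rex3_exp_gain K \<gamma> x t 0 w = 0"
| "rex3_exp_gain K \<gamma> x t (Suc n) w =
     (\<Sum>a<K. \<Sum>b<K. rex3_prob K \<gamma> w a * rex3_prob K \<gamma> w b *
        ((x t a + x t b) / 2
         + rex3_exp_gain K \<gamma> x (Suc t) n (rex3_update K \<gamma> w a b (x t a - x t b))))"

definition G_max :: "nat \<Rightarrow> nat \<Rightarrow> (nat \<Rightarrow> nat \<Rightarrow> real) \<Rightarrow> real" where
  "G_max K T x = Max ((\<lambda>i. \<Sum>t=1..T. x t i) ` {..<K})"

definition G_min :: "nat \<Rightarrow> nat \<Rightarrow> (nat \<Rightarrow> nat \<Rightarrow> real) \<Rightarrow> real" where
  "G_min K T x = Min ((\<lambda>i. \<Sum>t=1..T. x t i) ` {..<K})"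

definition rex3_EG_alg :: "nat \<Rightarrow> nat \<Rightarrow> real \<Rightarrow> (nat \<Rightarrow> nat \<Rightarrow> real) \<Rightarrow> real" where
  "rex3_EG_alg K T \<gamma> x = rex3_exp_gain K \<gamma> x 1 T (\<lambda>_. 1)"

definition rex3_tau :: "nat \<Rightarrow> nat \<Rightarrow> (nat \<Rightarrow> nat \<Rightarrow> real) \<Rightarrow> real" where
  "rex3_tau K T x = exp 1 * G_max K T x - (4 - exp 1) * G_min K T x"

definition rex3_gamma :: "nat \<Rightarrow> nat \<Rightarrow> (nat \<Rightarrow> nat \<Rightarrow> real) \<Rightarrow> real" where
  "rex3_gamma K T x =
     (if rex3_tau K T x = 0 then 1/2
      else min (1/2) (sqrt (real K * ln (real K) / rex3_tau K T x)))"

end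

theory Submission
  imports Defs
begin

(* Fix an arm j. Along a run of REX3 the log-potential ln (\<Sum>i. w i) - ln (w j) starts at ln K and
   stays nonnegative. In a round with expected reward \<mu> = \<Sum>i. p i * x i, the importance-weighted
   update changes ln (w j) by exactly \<gamma>/K * (x j - \<mu>) in expectation, while exp y \<le> 1 + y + y\<^sup>2
   (applicable because the exploration term keeps p i \<ge> \<gamma>/K) bounds the expected change of
   ln (\<Sum>i. w i) by 3 \<gamma>\<^sup>2/K * \<mu>. Summing over the rounds gives
   G_max - E G_alg \<le> K ln K / \<gamma> + 3 \<gamma> G_max. Finally G_max \<le> \<tau> \<le> 3 T, and the choice
   \<gamma> = min (1/2) (sqrt (K ln K / \<tau>)) balances the two terms: the regret is at most
   4 sqrt (K ln K \<tau>) \<le> 4 sqrt 3 * sqrt (K ln K T). *)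

lemma exp_bound_abs:
  fixes y :: real
  assumes "\<bar>y\<bar> \<le> 1"
  shows "exp y \<le> 1 + y + y\<^sup>2"
proof (cases "0 \<le> y")
  case True
  then show ?thesis using exp_bound[of y] assms by simp
next
  case False
  then have pos: "0 < 1 - y" by simp
  have "exp y = 1 / exp (- y)" by (simp add: exp_minus field_simps)
  also have "\<dots> \<le> 1 / (1 - y)"
    using exp_ge_add_one_self[of "- y"] pos by (intro divide_left_mono) auto
  also have "\<dots> \<le> 1 + y + y\<^sup>2"
  proof -
    have "(1 - y) * (1 + y + y\<^sup>2) = 1 - y ^ 3"
      by (simp add: algebra_simps power2_eq_square power3_eq_cube)
    also have "\<dots> \<ge> 1" using False by (simp add: power3_eq_cube mult_nonneg_nonpos)
    finally show ?thesis using pos by (simp add: field_simps)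
  qed
  finally show ?thesis .
qed

lemma ln_le_ln_add_diff:
  fixes a b :: real
  assumes "0 < a" "0 < b"
  shows "ln b \<le> ln a + (b - a) / a"
proof -
  have "ln b - ln a = ln (b / a)" using assms by (simp add: ln_div)
  also have "\<dots> \<le> b / a - 1" using assms by (intro ln_le_minus_one) simp
  also have "\<dots> = (b - a) / a" using assms by (simp add: field_simps)
  finally show ?thesis by simp
qed

definition pair_expectation :: "nat \<Rightarrow> (nat \<Rightarrow> real) \<Rightarrow> (nat \<Rightarrow> nat \<Rightarrow> real) \<Rightarrow> real" where
  "pair_expectation K p f = (\<Sum>a<K. \<Sum>b<K. p a * p b * f a b)"

lemma pair_expectation_add:
  "pair_expectation K p (\<lambda>a b. f a b + g a b) = pair_expectation K p f + pair_expectation K p g"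
  by (simp add: pair_expectation_def distrib_left sum.distrib)

lemma pair_expectation_diff:
  "pair_expectation K p (\<lambda>a b. f a b - g a b) = pair_expectation K p f - pair_expectation K p g"
  by (simp add: pair_expectation_def right_diff_distrib sum_subtractf)

lemma pair_expectation_cmult:
  "pair_expectation K p (\<lambda>a b. c * f a b) = c * pair_expectation K p f"
  by (simp add: pair_expectation_def sum_distrib_left mult_ac)

lemma pair_expectation_fst:
  assumes "(\<Sum>i<K. p i) = 1"
  shows "pair_expectation K p (\<lambda>a b. f a) = (\<Sum>a<K. p a * f a)"
  using assms
  by (simp add: pair_expectation_def mult.commute mult.left_commute
      flip: sum_distrib_left sum_distrib_right)

lemma pair_expectation_snd:
  assumes "(\<Sum>i<K. p i) = 1"
  shows "pair_expectation K p (\<lambda>a b. f b) = (\<Sum>b<K. p b * f b)"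
  using assms
  by (simp add: pair_expectation_def mult.assoc flip: sum_distrib_left sum_distrib_right)

lemma pair_expectation_const:
  assumes "(\<Sum>i<K. p i) = 1"
  shows "pair_expectation K p (\<lambda>a b. c) = c"
  using pair_expectation_fst[OF assms, of "\<lambda>_. c"] assms by (simp flip: sum_distrib_right)

lemma pair_expectation_swap:
  "pair_expectation K p (\<lambda>a b. f b a) = pair_expectation K p f"
  unfolding pair_expectation_def by (subst sum.swap) (simp add: mult_ac)

lemma pair_expectation_mono:
  assumes "\<forall>i<K. 0 \<le> p i" "\<And>a b. a < K \<Longrightarrow> b < K \<Longrightarrow> f a b \<le> g a b"
  shows "pair_expectation K p f \<le> pair_expectation K p g"
  unfolding pair_expectation_def using assms by (intro sum_mono mult_left_mono) auto

lemma pair_expectation_antisym: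
  assumes p_nz: "\<forall>i<K. p i \<noteq> 0" and p_sum: "(\<Sum>i<K. p i) = 1"
  shows "pair_expectation K p (\<lambda>a b. (x a - x b) * (c a / (2 * p a) - c b / (2 * p b)))
       = (\<Sum>i<K. c i * x i) - (\<Sum>i<K. c i) * (\<Sum>i<K. p i * x i)"
proof -
  define f where "f a b = (x a - x b) * c a / (2 * p a)" for a b
  have "pair_expectation K p (\<lambda>a b. (x a - x b) * (c a / (2 * p a) - c b / (2 * p b)))
      = pair_expectation K p (\<lambda>a b. f a b + f b a)"
    unfolding f_def
    by (intro arg_cong[where f = "pair_expectation K p"] ext)
      (simp add: diff_divide_distrib right_diff_distrib left_diff_distrib)
  also have "\<dots> = 2 * pair_expectation K p f"
    by (simp add: pair_expectation_add pair_expectation_swap[of K p f])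
  also have "pair_expectation K p f = (\<Sum>a<K. \<Sum>b<K. p b * (c a * x a - c a * x b)) / 2"
    unfolding pair_expectation_def f_def sum_divide_distrib
    using p_nz by (intro sum.cong refl) (simp add: field_simps)
  also have "(\<Sum>a<K. \<Sum>b<K. p b * (c a * x a - c a * x b))
      = (\<Sum>a<K. c a * x a * (\<Sum>b<K. p b) - c a * (\<Sum>b<K. p b * x b))"
    by (simp add: right_diff_distrib sum_subtractf sum_distrib_left mult_ac)
  also have "\<dots> = (\<Sum>i<K. c i * x i) - (\<Sum>i<K. c i) * (\<Sum>i<K. p i * x i)"
    using p_sum by (simp add: sum_subtractf sum_distrib_right)
  finally show ?thesis by simp
qed

lemma pair_expectation_average:
  assumes "(\<Sum>i<K. p i) = 1"
  shows "pair_expectation K p (\<lambda>a b. (x a + x b) / 2) = (\<Sum>i<K. p i * x i)"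
proof -
  have "pair_expectation K p (\<lambda>a b. (x a + x b) / 2)
      = pair_expectation K p (\<lambda>a b. x a / 2) + pair_expectation K p (\<lambda>a b. x b / 2)"
    by (simp add: add_divide_distrib pair_expectation_add)
  also have "\<dots> = (\<Sum>i<K. p i * x i)"
    using assms by (simp add: pair_expectation_fst pair_expectation_snd flip: sum.distrib)
  finally show ?thesis .
qed

lemma G_max_attained:
  assumes "0 < K"
  obtains j where "j < K" "G_max K T x = (\<Sum>t=1..T. x t j)"
proof -
  have "finite ((\<lambda>i. \<Sum>t=1..T. x t i) ` {..<K})" "(\<lambda>i. \<Sum>t=1..T. x t i) ` {..<K} \<noteq> {}"
    using assms by auto
  from Max_in[OF this] show ?thesis using that unfolding G_max_def by auto
qed

lemma G_min_G_max_bounds: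
  assumes "0 < K" and x: "\<forall>t i. 1 \<le> t \<and> t \<le> T \<and> i < K \<longrightarrow> 0 \<le> x t i \<and> x t i \<le> 1"
  shows "0 \<le> G_min K T x" "G_min K T x \<le> G_max K T x" "G_max K T x \<le> T"
proof -
  define A where "A = (\<lambda>i. \<Sum>t=1..T. x t i) ` {..<K}"
  have A: "finite A" "A \<noteq> {}" using assms(1) by (auto simp: A_def)
  have "0 \<le> a \<and> a \<le> T" if "a \<in> A" for a
  proof -
    obtain i where "i < K" "a = (\<Sum>t=1..T. x t i)" using \<open>a \<in> A\<close> by (auto simp: A_def)
    moreover from this have "(\<Sum>t=1..T. x t i) \<le> (\<Sum>t=1..T. 1)" using x by (intro sum_mono) auto
    ultimately show ?thesis using x by (auto intro!: sum_nonneg)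
  qed
  moreover have "G_min K T x = Min A" "G_max K T x = Max A"
    by (simp_all add: G_min_def G_max_def A_def)
  ultimately show "0 \<le> G_min K T x" "G_max K T x \<le> T" "G_min K T x \<le> G_max K T x"
    using A Min_in[OF A] Max_ge[OF A(1)] by simp_all
qed

locale rex3_parameters =
  fixes K :: nat and \<gamma> :: real
  assumes K_pos: "0 < K" and \<gamma>_pos: "0 < \<gamma>" and \<gamma>_le_half: "\<gamma> \<le> 1 / 2"
begin

abbreviation prob :: "(nat \<Rightarrow> real) \<Rightarrow> nat \<Rightarrow> real" where
  "prob w \<equiv> rex3_prob K \<gamma> w"

abbreviation expect :: "(nat \<Rightarrow> real) \<Rightarrow> (nat \<Rightarrow> nat \<Rightarrow> real) \<Rightarrow> real" where
  "expect w \<equiv> pair_expectation K (prob w)"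

lemma sum_weights_pos: "\<forall>i<K. 0 < (w :: nat \<Rightarrow> real) i \<Longrightarrow> 0 < (\<Sum>i<K. w i)"
  using K_pos by (auto intro!: sum_pos simp: lessThan_empty_iff)

lemma rex3_prob_ge:
  assumes "\<forall>i<K. 0 < w i" "i < K"
  shows "\<gamma> / K \<le> prob w i" and "(1 - \<gamma>) * w i / (\<Sum>j<K. w j) \<le> prob w i"
proof -
  have "0 \<le> (1 - \<gamma>) * w i / (\<Sum>j<K. w j)"
    using assms sum_weights_pos[OF assms(1)] \<gamma>_le_half by (simp add: less_imp_le)
  moreover have "0 \<le> \<gamma> / K" using \<gamma>_pos by simp
  ultimately show "\<gamma> / K \<le> prob w i" "(1 - \<gamma>) * w i / (\<Sum>j<K. w j) \<le> prob w i"
    unfolding rex3_prob_def by linarith+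
qed

lemma rex3_prob_pos: "\<forall>i<K. 0 < w i \<Longrightarrow> i < K \<Longrightarrow> 0 < prob w i"
  using rex3_prob_ge(1)[of w i] \<gamma>_pos K_pos
  by (meson divide_pos_pos less_le_trans of_nat_0_less_iff)

lemma sum_rex3_prob:
  assumes "\<forall>i<K. 0 < w i"
  shows "(\<Sum>i<K. prob w i) = 1"
proof -
  have "(\<Sum>i<K. prob w i) = (1 - \<gamma>) * (\<Sum>i<K. w i) / (\<Sum>i<K. w i) + \<gamma>"
    using K_pos unfolding rex3_prob_def
    by (simp add: sum.distrib sum_distrib_left flip: sum_divide_distrib)
  then show ?thesis using sum_weights_pos[OF assms] by simp
qed

lemma weight_eq_rex3_prob:
  assumes "\<forall>i<K. 0 < w i"
  shows "w i = (\<Sum>j<K. w j) / (1 - \<gamma>) * (prob w i - \<gamma> / K)"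
  using sum_weights_pos[OF assms] \<gamma>_le_half unfolding rex3_prob_def by (simp add: field_simps)

(* For a = b the two exponents cancel, which is the no-update case. *)
lemma rex3_update_eq_exp:
  "rex3_update K \<gamma> w a b z i = w i * exp (\<gamma> / K * z *
     ((if i = a then 1 / (2 * prob w a) else 0) - (if i = b then 1 / (2 * prob w b) else 0)))"
  unfolding rex3_update_def by auto

lemma rex3_update_pos: "\<forall>i<K. 0 < w i \<Longrightarrow> \<forall>i<K. 0 < rex3_update K \<gamma> w a b z i"
  by (simp add: rex3_update_eq_exp)

lemma expected_log_weight:
  assumes w_pos: "\<forall>i<K. 0 < w i" and j: "j < K"
  shows "expect w (\<lambda>a b. ln (rex3_update K \<gamma> w a b (xv a - xv b) j))
       = ln (w j) + \<gamma> / K * (xv j - (\<Sum>i<K. prob w i * xv i))"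
proof -
  define c :: "nat \<Rightarrow> real" where "c i = of_bool (i = j)" for i
  have "ln (rex3_update K \<gamma> w a b (xv a - xv b) j)
      = ln (w j) + \<gamma> / K * ((xv a - xv b) * (c a / (2 * prob w a) - c b / (2 * prob w b)))" for a b
    using w_pos j unfolding rex3_update_eq_exp c_def by (cases "a = j") (auto simp: ln_mult)
  then have "expect w (\<lambda>a b. ln (rex3_update K \<gamma> w a b (xv a - xv b) j)) = ln (w j)
      + \<gamma> / K * expect w (\<lambda>a b. (xv a - xv b) * (c a / (2 * prob w a) - c b / (2 * prob w b)))"
    by (simp only: pair_expectation_add pair_expectation_cmult
        pair_expectation_const[OF sum_rex3_prob[OF w_pos]])
  moreover have "expect w (\<lambda>a b. (xv a - xv b) * (c a / (2 * prob w a) - c b / (2 * prob w b)))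
      = (\<Sum>i<K. c i * xv i) - (\<Sum>i<K. c i) * (\<Sum>i<K. prob w i * xv i)"
    using rex3_prob_pos[OF w_pos] sum_rex3_prob[OF w_pos]
    by (intro pair_expectation_antisym) (auto simp: less_imp_neq[symmetric])
  moreover have "(\<Sum>i<K. c i * xv i) = xv j" "(\<Sum>i<K. c i) = 1"
    using j by (simp_all add: c_def)
  ultimately show ?thesis by simp
qed

lemma rex3_update_exponent_le:
  assumes w_pos: "\<forall>i<K. 0 < w i" and ab: "a < K" "b < K" and z: "\<bar>z\<bar> \<le> 1"
  shows "\<bar>\<gamma> / K * z * ((if i = a then 1 / (2 * prob w a) else 0)
                        - (if i = b then 1 / (2 * prob w b) else 0))\<bar> \<le> 1"
proof -
  define d where "d = (if i = a then 1 / (2 * prob w a) else 0)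
                      - (if i = b then 1 / (2 * prob w b) else 0)"
  have inv_prob: "0 < 1 / (2 * prob w c)" "1 / (2 * prob w c) \<le> K / (2 * \<gamma>)" if "c < K" for c
    using rex3_prob_ge(1)[OF w_pos that] rex3_prob_pos[OF w_pos that] \<gamma>_pos K_pos
    by (simp_all add: field_simps)
  have "\<bar>d\<bar> \<le> 1 / (2 * prob w a) + 1 / (2 * prob w b)"
    using inv_prob(1)[OF ab(1)] inv_prob(1)[OF ab(2)] unfolding d_def
    by (cases "i = a"; cases "i = b") (simp_all add: abs_if)
  also have "\<dots> \<le> K / (2 * \<gamma>) + K / (2 * \<gamma>)"
    using inv_prob(2)[OF ab(1)] inv_prob(2)[OF ab(2)] by (rule add_mono)
  finally have "\<bar>d\<bar> \<le> K / \<gamma>" by simp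
  then have "\<gamma> / K * \<bar>d\<bar> \<le> 1" using \<gamma>_pos K_pos by (simp add: field_simps)
  then have "\<bar>z\<bar> * (\<gamma> / K * \<bar>d\<bar>) \<le> 1" using \<gamma>_pos by (intro mult_le_one[OF z]) simp_all
  then show ?thesis using \<gamma>_pos by (simp add: d_def abs_mult mult_ac)
qed

lemma rex3_update_sum_le:
  assumes w_pos: "\<forall>i<K. 0 < w i" and xv: "\<forall>i<K. 0 \<le> xv i \<and> xv i \<le> 1"
    and ab: "a < K" "b < K"
  shows "(\<Sum>i<K. rex3_update K \<gamma> w a b (xv a - xv b) i)
       \<le> (\<Sum>i<K. w i)
         + \<gamma> / K * ((xv a - xv b) * (w a / (2 * prob w a) - w b / (2 * prob w b)))
         + (\<gamma> / K)\<^sup>2 * ((xv a - xv b)\<^sup>2 * (w a / (2 * prob w a)\<^sup>2 + w b / (2 * prob w b)\<^sup>2))"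
proof -
  define z where "z = xv a - xv b"
  define d where "d i = (if i = a then 1 / (2 * prob w a) else 0)
                      - (if i = b then 1 / (2 * prob w b) else 0)" for i
  define e where "e i = (if i = a then 1 / (2 * prob w a)\<^sup>2 else 0)
                      + (if i = b then 1 / (2 * prob w b)\<^sup>2 else 0)" for i
  have "\<bar>z\<bar> \<le> 1" using xv ab unfolding z_def by (smt (verit))
  then have y_le: "\<bar>\<gamma> / K * z * d i\<bar> \<le> 1" for i
    unfolding d_def by (rule rex3_update_exponent_le[OF w_pos ab])
  have d_sq: "(d i)\<^sup>2 \<le> e i" for i
    unfolding d_def e_def by (cases "i = a"; cases "i = b") (simp_all add: power_divide)
  have sum_lin: "(\<Sum>i<K. w i * d i) = w a / (2 * prob w a) - w b / (2 * prob w b)"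
    using ab by (simp add: d_def right_diff_distrib sum_subtractf
        if_distrib[of "\<lambda>u. w _ * u"] cong: if_cong)
  have sum_quad: "(\<Sum>i<K. w i * e i) = w a / (2 * prob w a)\<^sup>2 + w b / (2 * prob w b)\<^sup>2"
    using ab
    by (simp add: e_def distrib_left sum.distrib if_distrib[of "\<lambda>u. w _ * u"] cong: if_cong)
  have "(\<Sum>i<K. rex3_update K \<gamma> w a b (xv a - xv b) i) = (\<Sum>i<K. w i * exp (\<gamma> / K * z * d i))"
    by (simp add: rex3_update_eq_exp d_def z_def)
  also have "\<dots> \<le> (\<Sum>i<K. w i + \<gamma> / K * z * (w i * d i) + (\<gamma> / K)\<^sup>2 * z\<^sup>2 * (w i * (d i)\<^sup>2))"
  proof (rule sum_mono)
    fix i assume "i \<in> {..<K}"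
    then have "w i * exp (\<gamma> / K * z * d i) \<le> w i * (1 + \<gamma> / K * z * d i + (\<gamma> / K * z * d i)\<^sup>2)"
      using exp_bound_abs[OF y_le] w_pos by (intro mult_left_mono) auto
    then show "w i * exp (\<gamma> / K * z * d i)
        \<le> w i + \<gamma> / K * z * (w i * d i) + (\<gamma> / K)\<^sup>2 * z\<^sup>2 * (w i * (d i)\<^sup>2)"
      by (simp add: algebra_simps power_divide)
  qed
  also have "\<dots> \<le> (\<Sum>i<K. w i + \<gamma> / K * z * (w i * d i) + (\<gamma> / K)\<^sup>2 * z\<^sup>2 * (w i * e i))"
    using d_sq w_pos by (intro sum_mono add_left_mono mult_left_mono) (auto simp: less_imp_le)
  also have "\<dots> = (\<Sum>i<K. w i) + \<gamma> / K * (z * (w a / (2 * prob w a) - w b / (2 * prob w b)))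
         + (\<gamma> / K)\<^sup>2 * (z\<^sup>2 * (w a / (2 * prob w a)\<^sup>2 + w b / (2 * prob w b)\<^sup>2))"
    by (simp only: sum.distrib flip: sum_distrib_left sum_lin sum_quad)
  finally show ?thesis unfolding z_def .
qed

lemma expected_quadratic_term_le:
  assumes w_pos: "\<forall>i<K. 0 < w i" and xv: "\<forall>i<K. 0 \<le> xv i \<and> xv i \<le> 1"
  shows "expect w (\<lambda>a b. (xv a - xv b)\<^sup>2 * (w a / (2 * prob w a)\<^sup>2 + w b / (2 * prob w b)\<^sup>2))
       \<le> (\<Sum>i<K. w i) / (2 * (1 - \<gamma>)) * ((\<Sum>i<K. xv i) + K * (\<Sum>i<K. prob w i * xv i))"
proof -
  define W where "W = (\<Sum>i<K. w i)"
  define g where "g a b = (xv a - xv b)\<^sup>2 * (w a / (2 * prob w a)\<^sup>2)" for a b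
  have W: "0 < W" using sum_weights_pos[OF w_pos] by (simp add: W_def)
  have p_pos: "\<And>i. i < K \<Longrightarrow> 0 < prob w i" using rex3_prob_pos[OF w_pos] .
  have p_sum: "(\<Sum>i<K. prob w i) = 1" using sum_rex3_prob[OF w_pos] .
  have g_le: "g a b \<le> W / (4 * (1 - \<gamma>)) * ((xv a + xv b) / prob w a)" if ab: "a < K" "b < K" for a b
  proof -
    have x_unit: "0 \<le> xv a" "xv a \<le> 1" "0 \<le> xv b" "xv b \<le> 1" using xv ab by auto
    have "(xv a - xv b)\<^sup>2 = \<bar>xv a - xv b\<bar> * \<bar>xv a - xv b\<bar>" by (simp add: power2_eq_square)
    also have "\<dots> \<le> 1 * (xv a + xv b)"
      using x_unit by (intro mult_mono) (auto simp: abs_le_iff)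
    finally have z2: "(xv a - xv b)\<^sup>2 \<le> xv a + xv b" by simp
    have "w a / prob w a \<le> W / (1 - \<gamma>)"
      using rex3_prob_ge(2)[OF w_pos ab(1)] p_pos[OF ab(1)] W \<gamma>_le_half
      by (simp add: W_def field_simps)
    then have "(xv a - xv b)\<^sup>2 * (w a / prob w a) \<le> (xv a + xv b) * (W / (1 - \<gamma>))"
      using z2 x_unit w_pos p_pos ab W \<gamma>_le_half by (intro mult_mono) (auto simp: less_imp_le)
    then have "(xv a - xv b)\<^sup>2 * (w a / prob w a) / (4 * prob w a)
        \<le> (xv a + xv b) * (W / (1 - \<gamma>)) / (4 * prob w a)"
      using p_pos[OF ab(1)] by (intro divide_right_mono) auto
    moreover have "g a b = (xv a - xv b)\<^sup>2 * (w a / prob w a) / (4 * prob w a)"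
      using p_pos[OF ab(1)] unfolding g_def by (simp add: field_simps power2_eq_square)
    ultimately show ?thesis by (simp add: field_simps)
  qed
  have "expect w (\<lambda>a b. (xv a - xv b)\<^sup>2 * (w a / (2 * prob w a)\<^sup>2 + w b / (2 * prob w b)\<^sup>2))
      = expect w (\<lambda>a b. g a b + g b a)"
    unfolding g_def by (simp add: distrib_left power2_commute)
  also have "\<dots> = 2 * expect w g"
    by (simp add: pair_expectation_add pair_expectation_swap[of K _ g])
  also have "expect w g \<le> expect w (\<lambda>a b. W / (4 * (1 - \<gamma>)) * ((xv a + xv b) / prob w a))"
    using g_le p_pos by (intro pair_expectation_mono) (auto simp: less_imp_le)
  also have "\<dots> = W / (4 * (1 - \<gamma>)) * (\<Sum>a<K. \<Sum>b<K. prob w b * (xv a + xv b))"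
    unfolding pair_expectation_cmult unfolding pair_expectation_def
    using p_pos by (simp add: less_imp_neq[symmetric])
  also have "(\<Sum>a<K. \<Sum>b<K. prob w b * (xv a + xv b)) = (\<Sum>i<K. xv i) + K * (\<Sum>i<K. prob w i * xv i)"
    using p_sum by (simp add: distrib_left sum.distrib mult.commute flip: sum_distrib_left)
  finally show ?thesis using \<gamma>_le_half by (simp add: W_def field_simps)
qed

lemma expected_linear_term_eq:
  assumes w_pos: "\<forall>i<K. 0 < w i"
  shows "expect w (\<lambda>a b. (xv a - xv b) * (w a / (2 * prob w a) - w b / (2 * prob w b)))
       = (\<Sum>i<K. w i) * \<gamma> * ((\<Sum>i<K. prob w i * xv i) - (\<Sum>i<K. xv i) / K) / (1 - \<gamma>)"
proof -
  define W where "W = (\<Sum>i<K. w i)"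
  define \<mu> where "\<mu> = (\<Sum>i<K. prob w i * xv i)"
  define sx where "sx = (\<Sum>i<K. xv i)"
  have "w i * xv i = W / (1 - \<gamma>) * (prob w i * xv i - \<gamma> / K * xv i)" for i
    by (subst weight_eq_rex3_prob[OF w_pos, of i]) (simp add: W_def algebra_simps)
  then have weighted: "(\<Sum>i<K. w i * xv i) = W / (1 - \<gamma>) * (\<mu> - \<gamma> / K * sx)"
    unfolding \<mu>_def sx_def by (simp add: right_diff_distrib sum_subtractf sum_distrib_left)
  have "expect w (\<lambda>a b. (xv a - xv b) * (w a / (2 * prob w a) - w b / (2 * prob w b)))
      = (\<Sum>i<K. w i * xv i) - W * \<mu>"
    unfolding W_def \<mu>_def using rex3_prob_pos[OF w_pos] sum_rex3_prob[OF w_pos]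
    by (intro pair_expectation_antisym) (auto simp: less_imp_neq[symmetric])
  also have "\<dots> = W * \<gamma> * (\<mu> - sx / K) / (1 - \<gamma>)"
    using weighted \<gamma>_le_half K_pos by (simp add: field_simps)
  finally show ?thesis by (simp add: W_def \<mu>_def sx_def)
qed

lemma expected_total_weight_le:
  assumes w_pos: "\<forall>i<K. 0 < w i" and xv: "\<forall>i<K. 0 \<le> xv i \<and> xv i \<le> 1"
  shows "expect w (\<lambda>a b. \<Sum>i<K. rex3_update K \<gamma> w a b (xv a - xv b) i)
       \<le> (\<Sum>i<K. w i) * (1 + 3 * \<gamma>\<^sup>2 / K * (\<Sum>i<K. prob w i * xv i))"
proof -
  define W where "W = (\<Sum>i<K. w i)"
  define \<mu> where "\<mu> = (\<Sum>i<K. prob w i * xv i)"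
  define sx where "sx = (\<Sum>i<K. xv i)"
  define lin where "lin a b = (xv a - xv b) * (w a / (2 * prob w a) - w b / (2 * prob w b))" for a b
  define quad where
    "quad a b = (xv a - xv b)\<^sup>2 * (w a / (2 * prob w a)\<^sup>2 + w b / (2 * prob w b)\<^sup>2)" for a b
  have W: "0 < W" using sum_weights_pos[OF w_pos] by (simp add: W_def)
  have \<mu>: "0 \<le> \<mu>"
    using rex3_prob_pos[OF w_pos] xv unfolding \<mu>_def by (intro sum_nonneg) (simp add: less_imp_le)
  have sx: "0 \<le> sx" using xv unfolding sx_def by (intro sum_nonneg) simp
  have "expect w (\<lambda>a b. \<Sum>i<K. rex3_update K \<gamma> w a b (xv a - xv b) i)
      \<le> expect w (\<lambda>a b. W + \<gamma> / K * lin a b + (\<gamma> / K)\<^sup>2 * quad a b)"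
    using rex3_update_sum_le[OF w_pos xv] rex3_prob_pos[OF w_pos]
    by (intro pair_expectation_mono) (auto simp: lin_def quad_def W_def less_imp_le)
  also have "\<dots> = W + \<gamma> / K * expect w lin + (\<gamma> / K)\<^sup>2 * expect w quad"
    by (simp only: pair_expectation_add pair_expectation_cmult
        pair_expectation_const[OF sum_rex3_prob[OF w_pos]])
  also have "expect w lin = W * \<gamma> * (\<mu> - sx / K) / (1 - \<gamma>)"
    unfolding lin_def W_def \<mu>_def sx_def by (rule expected_linear_term_eq[OF w_pos])
  also have "(\<gamma> / K)\<^sup>2 * expect w quad \<le> (\<gamma> / K)\<^sup>2 * (W / (2 * (1 - \<gamma>)) * (sx + K * \<mu>))"
    using expected_quadratic_term_le[OF w_pos xv] unfolding quad_def W_def \<mu>_def sx_def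
    by (intro mult_left_mono) auto
  also have "W + \<gamma> / K * (W * \<gamma> * (\<mu> - sx / K) / (1 - \<gamma>))
        + (\<gamma> / K)\<^sup>2 * (W / (2 * (1 - \<gamma>)) * (sx + K * \<mu>))
      = W + W * \<gamma>\<^sup>2 / K * ((3 * \<mu> - sx / K) / (2 * (1 - \<gamma>)))"
  proof -
    have alg: "W + \<gamma> / K * (W * \<gamma> * (\<mu> - sx / K) / d) + (\<gamma> / K)\<^sup>2 * (W / (2 * d) * (sx + K * \<mu>))
        = W + W * \<gamma>\<^sup>2 / K * ((3 * \<mu> - sx / K) / (2 * d))" if "d \<noteq> 0" for d
      using that K_pos by (simp add: field_simps power2_eq_square)
    show ?thesis by (rule alg) (use \<gamma>_le_half in simp)
  qed
  also have "\<dots> \<le> W + W * \<gamma>\<^sup>2 / K * (3 * \<mu>)"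
  proof -
    have "\<gamma> * \<mu> \<le> 1 / 2 * \<mu>" using \<mu> \<gamma>_le_half by (intro mult_right_mono)
    moreover have "0 \<le> sx / K" using sx by simp
    ultimately have "(3 * \<mu> - sx / K) / (2 * (1 - \<gamma>)) \<le> 3 * \<mu>"
      using \<gamma>_le_half by (simp add: field_simps)
    then show ?thesis using W by (intro add_left_mono mult_left_mono) auto
  qed
  finally show ?thesis by (simp add: W_def \<mu>_def algebra_simps)
qed

lemma expected_log_total_weight_le:
  assumes w_pos: "\<forall>i<K. 0 < w i" and xv: "\<forall>i<K. 0 \<le> xv i \<and> xv i \<le> 1"
  shows "expect w (\<lambda>a b. ln (\<Sum>i<K. rex3_update K \<gamma> w a b (xv a - xv b) i))
       \<le> ln (\<Sum>i<K. w i) + 3 * \<gamma>\<^sup>2 / K * (\<Sum>i<K. prob w i * xv i)"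
proof -
  define W where "W = (\<Sum>i<K. w i)"
  define W' where "W' a b = (\<Sum>i<K. rex3_update K \<gamma> w a b (xv a - xv b) i)" for a b
  have W: "0 < W" using sum_weights_pos[OF w_pos] by (simp add: W_def)
  have W': "0 < W' a b" for a b
    using sum_weights_pos[OF rex3_update_pos[OF w_pos]] by (simp add: W'_def)
  have "expect w (\<lambda>a b. ln (W' a b)) \<le> expect w (\<lambda>a b. ln W + inverse W * (W' a b - W))"
    using ln_le_ln_add_diff[OF W W'] rex3_prob_pos[OF w_pos]
    by (intro pair_expectation_mono) (auto simp: less_imp_le divide_inverse mult.commute)
  also have "\<dots> = ln W + inverse W * (expect w W' - W)"
    by (simp only: pair_expectation_add pair_expectation_cmult pair_expectation_diff
        pair_expectation_const[OF sum_rex3_prob[OF w_pos]])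
  also have "\<dots> \<le> ln W + inverse W * (W * (1 + 3 * \<gamma>\<^sup>2 / K * (\<Sum>i<K. prob w i * xv i)) - W)"
    using expected_total_weight_le[OF w_pos xv] W unfolding W'_def W_def by simp
  finally show ?thesis using W by (simp add: W_def W'_def field_simps)
qed

lemma expected_log_potential_le:
  assumes w_pos: "\<forall>i<K. 0 < w i" and xv: "\<forall>i<K. 0 \<le> xv i \<and> xv i \<le> 1" and j: "j < K"
  shows "expect w (\<lambda>a b. ln (\<Sum>i<K. rex3_update K \<gamma> w a b (xv a - xv b) i)
                           - ln (rex3_update K \<gamma> w a b (xv a - xv b) j))
       \<le> ln (\<Sum>i<K. w i) - ln (w j) - \<gamma> / K * xv j
         + \<gamma> / K * (1 + 3 * \<gamma>) * (\<Sum>i<K. prob w i * xv i)"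
  using expected_log_total_weight_le[OF w_pos xv] expected_log_weight[OF w_pos j, of xv]
  by (simp add: pair_expectation_diff algebra_simps power2_eq_square add_divide_distrib)

lemma rex3_exp_gain_Suc_eq:
  "rex3_exp_gain K \<gamma> x t (Suc n) w = expect w (\<lambda>a b. (x t a + x t b) / 2
     + rex3_exp_gain K \<gamma> x (Suc t) n (rex3_update K \<gamma> w a b (x t a - x t b)))"
  by (simp add: pair_expectation_def)

lemma rex3_exp_gain_nonneg:
  assumes "\<And>s i. t \<le> s \<Longrightarrow> s < t + n \<Longrightarrow> i < K \<Longrightarrow> 0 \<le> x s i" and "\<forall>i<K. 0 < w i"
  shows "0 \<le> rex3_exp_gain K \<gamma> x t n w"
  using assms
proof (induction n arbitrary: t w)
  case 0
  then show ?case by simp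
next
  case (Suc n)
  have "0 \<le> expect w (\<lambda>a b. (x t a + x t b) / 2
     + rex3_exp_gain K \<gamma> x (Suc t) n (rex3_update K \<gamma> w a b (x t a - x t b)))"
    unfolding pair_expectation_def
    using Suc.prems Suc.IH[of "Suc t"] rex3_update_pos rex3_prob_pos[OF Suc.prems(2)]
    by (intro sum_nonneg mult_nonneg_nonneg add_nonneg_nonneg) (auto simp: less_imp_le)
  then show ?case by (simp only: rex3_exp_gain_Suc_eq)
qed

lemma rex3_log_potential_bound:
  assumes "\<And>s i. t \<le> s \<Longrightarrow> s < t + n \<Longrightarrow> i < K \<Longrightarrow> 0 \<le> x s i \<and> x s i \<le> 1"
    and "\<forall>i<K. 0 < w i" and j: "j < K"
  shows "\<gamma> / K * (\<Sum>s=t..<t+n. x s j)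
       \<le> ln (\<Sum>i<K. w i) - ln (w j) + \<gamma> / K * (1 + 3 * \<gamma>) * rex3_exp_gain K \<gamma> x t n w"
  using assms(1,2)
proof (induction n arbitrary: t w)
  case 0
  have "w j \<le> (\<Sum>i<K. w i)" using 0 j by (intro member_le_sum) (auto simp: less_imp_le)
  then have "ln (w j) \<le> ln (\<Sum>i<K. w i)"
    using 0 j sum_weights_pos[OF 0(2)] by (subst ln_le_cancel_iff) auto
  then show ?case by simp
next
  case (Suc n)
  define c where "c = \<gamma> / K * (1 + 3 * \<gamma>)"
  define w' where "w' a b = rex3_update K \<gamma> w a b (x t a - x t b)" for a b
  define G' where "G' a b = rex3_exp_gain K \<gamma> x (Suc t) n (w' a b)" for a b
  define \<mu> where "\<mu> = (\<Sum>i<K. prob w i * x t i)"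
  have w_pos: "\<forall>i<K. 0 < w i" by (fact Suc.prems(2))
  have xt: "\<forall>i<K. 0 \<le> x t i \<and> x t i \<le> 1" using Suc.prems(1) by auto
  have p_sum: "(\<Sum>i<K. prob w i) = 1" using sum_rex3_prob[OF w_pos] .
  have "\<gamma> / K * (\<Sum>s=Suc t..<Suc t+n. x s j)
      \<le> ln (\<Sum>i<K. w' a b i) - ln (w' a b j) + c * G' a b" for a b
    unfolding c_def G'_def w'_def
    using Suc.prems(1) rex3_update_pos[OF w_pos] by (intro Suc.IH) auto
  then have "\<gamma> / K * (\<Sum>s=Suc t..<Suc t+n. x s j)
      \<le> expect w (\<lambda>a b. ln (\<Sum>i<K. w' a b i) - ln (w' a b j) + c * G' a b)"
    using pair_expectation_mono[of K "prob w" "\<lambda>_ _. \<gamma> / K * (\<Sum>s=Suc t..<Suc t+n. x s j)"]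
      rex3_prob_pos[OF w_pos] pair_expectation_const[OF p_sum] by (auto simp: less_imp_le)
  also have "\<dots> = expect w (\<lambda>a b. ln (\<Sum>i<K. w' a b i) - ln (w' a b j)) + c * expect w G'"
    by (simp only: pair_expectation_add pair_expectation_cmult)
  also have "\<dots> \<le> ln (\<Sum>i<K. w i) - ln (w j) - \<gamma> / K * x t j + c * \<mu> + c * expect w G'"
    using expected_log_potential_le[OF w_pos xt j] unfolding w'_def \<mu>_def c_def by simp
  also have "\<dots> = ln (\<Sum>i<K. w i) - ln (w j) - \<gamma> / K * x t j + c * (\<mu> + expect w G')"
    by (simp add: distrib_left)
  also have "\<mu> + expect w G' = rex3_exp_gain K \<gamma> x t (Suc n) w"
    unfolding rex3_exp_gain_Suc_eq G'_def w'_def \<mu>_def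
    by (simp add: pair_expectation_add pair_expectation_average[OF p_sum])
  finally have step: "\<gamma> / K * (\<Sum>s=Suc t..<Suc t+n. x s j)
      \<le> ln (\<Sum>i<K. w i) - ln (w j) - \<gamma> / K * x t j + c * rex3_exp_gain K \<gamma> x t (Suc n) w" .
  have "(\<Sum>s=t..<t+Suc n. x s j) = x t j + (\<Sum>s=Suc t..<Suc t+n. x s j)"
    by (simp add: sum.atLeast_Suc_lessThan)
  then have "\<gamma> / K * (\<Sum>s=t..<t+Suc n. x s j)
      = \<gamma> / K * x t j + \<gamma> / K * (\<Sum>s=Suc t..<Suc t+n. x s j)"
    by (simp only: distrib_left)
  with step show ?case unfolding c_def by linarith
qed

lemma rex3_EG_alg_nonneg:
  assumes "\<forall>t i. 1 \<le> t \<and> t \<le> T \<and> i < K \<longrightarrow> 0 \<le> x t i \<and> x t i \<le> 1"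
  shows "0 \<le> rex3_EG_alg K T \<gamma> x"
  unfolding rex3_EG_alg_def using assms by (intro rex3_exp_gain_nonneg) auto

lemma rex3_regret_le:
  assumes x: "\<forall>t i. 1 \<le> t \<and> t \<le> T \<and> i < K \<longrightarrow> 0 \<le> x t i \<and> x t i \<le> 1"
  shows "G_max K T x - rex3_EG_alg K T \<gamma> x \<le> K * ln K / \<gamma> + 3 * \<gamma> * G_max K T x"
proof -
  obtain j where j: "j < K" "G_max K T x = (\<Sum>t=1..T. x t j)" using G_max_attained[OF K_pos] .
  define G where "G = rex3_EG_alg K T \<gamma> x"
  have "\<gamma> / K * G_max K T x \<le> ln K + \<gamma> / K * (1 + 3 * \<gamma>) * G"
    using rex3_log_potential_bound[of 1 T x "\<lambda>_. 1" j] x j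
    by (simp add: G_def rex3_EG_alg_def atLeastLessThanSuc_atLeastAtMost)
  then have "G_max K T x - G \<le> K * ln K / \<gamma> + 3 * \<gamma> * G"
    using \<gamma>_pos K_pos by (simp add: field_simps)
  moreover have "0 \<le> 3 * \<gamma> * G_max K T x" "0 \<le> K * ln K / \<gamma>"
    using G_min_G_max_bounds[OF K_pos x] K_pos \<gamma>_pos by auto
  moreover have "3 * \<gamma> * G \<le> 3 * \<gamma> * G_max K T x" if "G \<le> G_max K T x"
    using that \<gamma>_pos by simp
  ultimately show ?thesis
    unfolding G_def[symmetric] by (cases "G \<le> G_max K T x") auto
qed

end

lemma rex3_tau_bounds:
  assumes "0 < K" and x: "\<forall>t i. 1 \<le> t \<and> t \<le> T \<and> i < K \<longrightarrow> 0 \<le> x t i \<and> x t i \<le> 1"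
  shows "G_max K T x \<le> rex3_tau K T x" "rex3_tau K T x \<le> 3 * real T"
proof -
  note G = G_min_G_max_bounds[OF assms]
  have e: "5 / 2 \<le> exp (1::real)" "exp (1::real) \<le> 3"
    using exp_lower_Taylor_quadratic[of "1::real"] exp_le by simp_all
  have "(4 - exp 1) * G_min K T x \<le> (4 - exp 1) * G_max K T x"
    using G e by (intro mult_left_mono) auto
  moreover have "0 \<le> (2 * exp 1 - 5) * G_max K T x" using G e by simp
  ultimately show "G_max K T x \<le> rex3_tau K T x"
    unfolding rex3_tau_def by (simp add: algebra_simps)
  have "exp 1 * G_max K T x \<le> 3 * real T" using G e by (intro mult_mono) auto
  moreover have "0 \<le> (4 - exp 1) * G_min K T x" using G e by simp
  ultimately show "rex3_tau K T x \<le> 3 * real T" unfolding rex3_tau_def by simp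
qed

lemma rex3_gamma_bounds:
  assumes "2 \<le> K" "0 \<le> rex3_tau K T x"
  shows "0 < rex3_gamma K T x" "rex3_gamma K T x \<le> 1 / 2"
  using assms by (auto simp: rex3_gamma_def min_def)

lemma sqrt_tuning_bound:
  fixes L \<tau> M R \<gamma> :: real
  assumes L: "0 < L" and M: "0 \<le> M" "M \<le> \<tau>" and R: "R \<le> M" "R \<le> L / \<gamma> + 3 * \<gamma> * M"
    and \<gamma>: "\<gamma> = (if \<tau> = 0 then 1/2 else min (1/2) (sqrt (L / \<tau>)))"
  shows "R \<le> 4 * sqrt (L * \<tau>)"
proof (cases "\<tau> = 0")
  case True
  then show ?thesis using M R by simp
next
  case False
  then have \<tau>: "0 < \<tau>" using M by simp
  define s where "s = sqrt (L / \<tau>)"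
  have "0 < s" and s2: "s\<^sup>2 = L / \<tau>" using L \<tau> by (simp_all add: s_def)
  then have "s * \<tau> = sqrt (L * \<tau>)" "L / s = s * \<tau>"
    using \<tau> by (auto intro!: real_sqrt_unique[symmetric] simp: field_simps power2_eq_square)
  then have s: "0 < s" "s * \<tau> = sqrt (L * \<tau>)" "L / s = sqrt (L * \<tau>)"
    using \<open>0 < s\<close> by simp_all
  show ?thesis
  proof (cases "s \<le> 1/2")
    case True
    then have "\<gamma> = s" using \<gamma> False by (simp add: s_def)
    moreover have "3 * s * M \<le> 3 * s * \<tau>" using M s by (intro mult_left_mono) auto
    ultimately have "R \<le> L / s + 3 * s * \<tau>" using R by simp
    then show ?thesis using s by simp
  next
    case False
    (* Here \<tau> < 4 L, so the trivial bound R \<le> \<tau> is already of order sqrt (L \<tau>). *)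
    then have "(1 / 2)\<^sup>2 < s\<^sup>2" by (intro power_strict_mono) auto
    then have "1 / 4 < L / \<tau>" by (simp add: s2 power_divide)
    then have "\<tau> * \<tau> \<le> 4 * L * \<tau>" using \<tau> by (simp add: field_simps)
    have "\<tau> = sqrt (\<tau> * \<tau>)" using \<tau> by simp
    also have "\<dots> \<le> sqrt (4 * (L * \<tau>))"
      using \<open>\<tau> * \<tau> \<le> 4 * L * \<tau>\<close> by (intro real_sqrt_le_mono) (simp add: mult.assoc)
    also have "\<dots> = 2 * sqrt (L * \<tau>)" by (simp add: real_sqrt_mult)
    finally show ?thesis using R M real_sqrt_ge_zero[of "L * \<tau>"] L \<tau> by linarith
  qed
qed

theorem corollary2:
  shows "\<exists>C::real. \<forall>(K::nat) (T::nat) (x::nat \<Rightarrow> nat \<Rightarrow> real).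
           K \<ge> 2 \<longrightarrow> T \<ge> 1 \<longrightarrow>
           (\<forall>t i. 1 \<le> t \<and> t \<le> T \<and> i < K \<longrightarrow> 0 \<le> x t i \<and> x t i \<le> 1) \<longrightarrow>
           G_max K T x - rex3_EG_alg K T (rex3_gamma K T x) x
             \<le> C * sqrt (real K * ln (real K) * real T)"
proof (intro exI[of _ "4 * sqrt 3"] allI impI)
  fix K T :: nat and x :: "nat \<Rightarrow> nat \<Rightarrow> real"
  assume K: "K \<ge> 2" and "T \<ge> 1"
    and x: "\<forall>t i. 1 \<le> t \<and> t \<le> T \<and> i < K \<longrightarrow> 0 \<le> x t i \<and> x t i \<le> 1"
  define \<tau> where "\<tau> = rex3_tau K T x"
  define \<gamma> where "\<gamma> = rex3_gamma K T x"
  have K_pos: "0 < K" using K by simp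
  have \<tau>: "G_max K T x \<le> \<tau>" "\<tau> \<le> 3 * real T"
    using rex3_tau_bounds[OF K_pos x] by (simp_all add: \<tau>_def)
  have G_max: "0 \<le> G_max K T x" using G_min_G_max_bounds[OF K_pos x] by simp
  interpret rex3_parameters K \<gamma>
    using K_pos rex3_gamma_bounds[OF K] G_max \<tau> by unfold_locales (auto simp: \<gamma>_def \<tau>_def)
  have "G_max K T x - rex3_EG_alg K T \<gamma> x \<le> 4 * sqrt (K * ln K * \<tau>)"
  proof (rule sqrt_tuning_bound[OF _ G_max \<tau>(1)])
    show "0 < K * ln K" using K by simp
    show "G_max K T x - rex3_EG_alg K T \<gamma> x \<le> G_max K T x"
      using rex3_EG_alg_nonneg[OF x] by simp
    show "G_max K T x - rex3_EG_alg K T \<gamma> x \<le> K * ln K / \<gamma> + 3 * \<gamma> * G_max K T x"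
      using rex3_regret_le[OF x] .
    show "\<gamma> = (if \<tau> = 0 then 1 / 2 else min (1 / 2) (sqrt (K * ln K / \<tau>)))"
      by (simp add: \<gamma>_def \<tau>_def rex3_gamma_def)
  qed
  also have "\<dots> \<le> 4 * sqrt (K * ln K * (3 * T))"
    using \<tau>(2) K by (simp add: mult_left_mono)
  also have "\<dots> = 4 * sqrt 3 * sqrt (K * ln K * T)"
    by (simp add: real_sqrt_mult[symmetric] mult_ac)
  finally show "G_max K T x - rex3_EG_alg K T (rex3_gamma K T x) x
      \<le> 4 * sqrt 3 * sqrt (K * ln K * T)"
    by (simp add: \<gamma>_def)
qed

end
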